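(* Let $f:\mathbb{N}\to\mathbb{R}$ with $f(1)=1$, and assume there exist $A,c>0$ such that $|f(n)|\leq A c^n$ for all $n\geq2$. (i) If $c\in(0,1)$, then $$|f^{-1}(n)| \leq \frac{\Omega(n)\, A\, n^{\varsigma+e\ln c}}{2^{\varsigma}} \leq \frac{A\, n^{\varsigma+e\ln c}\ln n}{2^{\varsigma}\ln 2}, \quad n\geq2,$$ where $\varsigma>1$ is the unique root of $\zeta(s)=\frac{1}{A}+1$. (ii) If $c\in(0,1)$ and $A\leq1$, then $|f^{-1}(n)|\leq n^{\rho+e\ln c}$ for all $n\geq2$, where $\rho=1.72865\dots$ is the unique root $s>1$ of $\zeta(s)=2$. (iii) If $c>1$, then there exists $\widetilde{A}>0$ such that $$|f^{-1}(n)| \leq Ac^n + \frac{(\Omega(n)-1)\,A\, n^{\upsilon}}{2^{\upsilon}}\, c^{n/2} \leq \widetilde{A}\, c^n, \quad n\geq2,$$ where $\upsilon>1$ is the unique root of $\zeta(s)=\frac{1}{Ac^2}+1$.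
   Context: $f^{-1}$ denotes the Dirichlet inverse of $f$: the arithmetic function with $\sum_{d\mid n} f(n/d) f^{-1}(d)=\varepsilon(n)$ for all $n$, where $\varepsilon(1)=1$ and $\varepsilon(n)=0$ for $n\ge2$. $\Omega(n)$ is the number of prime factors of $n$ counted with multiplicity. $\zeta$ is the Riemann zeta function and $e$ is Euler's number. *)

theory Defs
  imports "HOL-Analysis.Analysis" "HOL-Computational_Algebra.Primes"
begin

text \<open>Dirichlet inverse of an arithmetic function f (defined on positive integers;
  the value at 0 is normalised to 0 so that the inverse is unique when f 1 is nonzero).\<close>
definition dirichlet_inverse :: "(nat \<Rightarrow> real) \<Rightarrow> nat \<Rightarrow> real" where
  "dirichlet_inverse f = (THE g. g 0 = 0 \<and>
     (\<forall>n>0. (\<Sum>d | d dvd n. f (n div d) * g d) = (if n = 1 then 1 else 0)))"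

definition bigOmega :: "nat \<Rightarrow> nat" where
  "bigOmega n = size (prime_factorization n)"

definition zeta :: "real \<Rightarrow> real" where
  "zeta s = (\<Sum>n. 1 / (real (Suc n)) powr s)"

end

theory Submission
  imports Defs "HOL-Real_Asymp.Real_Asymp"
begin

(*
  For n >= 2 the convolution identity defining g = f^(-1) yields the recursion
  g n = -(f n + sum of f e * g (n div e) over the divisors 1 < e < n), so by strong induction
  |g| is bounded by every B with F n + sum of F e * B (n div e) <= B n, where F majorises |f|.
  Each claimed bound is such a majorant: splitting n = e * (n div e) leaves a factor e^(-s),
  whose sum over the divisors is at most zeta s - 1, and s is chosen precisely so that this
  cancels the constant in front.  The term f n is paid for by Omega (n div e) <= Omega n - 1,
  or in (ii) by letting e = n join the zeta sum.  For c < 1 the decay of f becomes a power of n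
  through c^k <= k^(e ln c); for c > 1 one uses c^e * c^k <= c^2 * c^(e k / 2) for e, k >= 2.
*)

section \<open>The real zeta function\<close>

lemma summable_zeta_terms: "s > 1 \<Longrightarrow> summable (\<lambda>n. 1 / real (Suc n) powr s)"
proof -
  assume "s > 1"
  then have "summable (\<lambda>n. real n powr (-s))" using summable_real_powr_iff[of "-s"] by simp
  then have "summable (\<lambda>n. real (Suc n) powr (-s))" by (subst summable_Suc_iff)
  then show ?thesis by (simp add: powr_minus divide_inverse)
qed

lemma zeta_strict_antimono:
  assumes "1 < s" "s < t" shows "zeta t < zeta s"
proof -
  have "0 < (\<Sum>n. 1 / real (Suc n) powr s - 1 / real (Suc n) powr t)"
  proof (rule suminf_pos2[where i=1])
    show "summable (\<lambda>n. 1 / real (Suc n) powr s - 1 / real (Suc n) powr t)"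
      using summable_zeta_terms assms by (intro summable_diff) auto
    show "0 \<le> 1 / real (Suc n) powr s - 1 / real (Suc n) powr t" for n
      using assms by (auto intro!: divide_left_mono powr_mono)
    show "0 < 1 / real (Suc 1) powr s - 1 / real (Suc 1) powr t"
      using assms by (simp add: frac_less2)
  qed
  also have "\<dots> = zeta s - zeta t" unfolding zeta_def
    using summable_zeta_terms assms by (subst suminf_diff) auto
  finally show ?thesis by simp
qed

lemma sum_inverse_powr_le_zeta_minus_one:
  assumes "s > 1" "finite S" "S \<subseteq> {2..}"
  shows "(\<Sum>k\<in>S. 1 / real k powr s) \<le> zeta s - 1"
proof -
  define T where "T = insert 0 ((\<lambda>k. k - 1) ` S)"
  have "(\<Sum>k\<in>S. 1 / real k powr s) = (\<Sum>n\<in>(\<lambda>k. k - 1) ` S. 1 / real (Suc n) powr s)"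
    using assms(3) by (intro sum.reindex_bij_witness[of _ Suc "\<lambda>k. k - 1"]) auto
  then have "1 + (\<Sum>k\<in>S. 1 / real k powr s) = (\<Sum>n\<in>T. 1 / real (Suc n) powr s)"
    using assms(2,3) unfolding T_def by (subst sum.insert) auto
  also have "\<dots> \<le> zeta s" unfolding zeta_def T_def
    using assms by (intro sum_le_suminf summable_zeta_terms) auto
  finally show ?thesis by simp
qed

lemma continuous_on_zeta: "a > 1 \<Longrightarrow> continuous_on {a..} zeta"
  unfolding zeta_def
proof (rule uniform_limit_theorem[where F=sequentially])
  assume a: "a > 1"
  show "uniform_limit {a..} (\<lambda>N s. \<Sum>n<N. 1 / real (Suc n) powr s)
          (\<lambda>s. \<Sum>n. 1 / real (Suc n) powr s) sequentially"
    by (rule Weierstrass_m_test[OF _ summable_zeta_terms[OF a]])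
       (auto intro!: divide_left_mono powr_mono)
qed (auto intro!: always_eventually continuous_intros)

lemma zeta_unbounded_at_one: "\<exists>s>1. zeta s > M"
proof -
  obtain N where N: "harm N > M"
    using filterlim_at_top_dense harm_at_top eventually_at_top_linorder by (metis order_refl)
  have "((\<lambda>s. \<Sum>n<N. 1 / real (Suc n) powr s) \<longlongrightarrow> (\<Sum>n<N. 1 / real (Suc n) powr 1)) (at_right 1)"
    by (intro tendsto_intros) auto
  moreover have "(\<Sum>n<N. 1 / real (Suc n) powr 1) = harm N"
    by (simp add: harm_altdef divide_inverse)
  ultimately have "\<forall>\<^sub>F s in at_right 1. M < (\<Sum>n<N. 1 / real (Suc n) powr s)"
    using N order_tendstoD(1) by fastforce
  then obtain b where b: "b > 1" "\<And>s. 1 < s \<Longrightarrow> s < b \<Longrightarrow> M < (\<Sum>n<N. 1 / real (Suc n) powr s)"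
    unfolding eventually_at_right_field by blast
  define s where "s = (1 + b) / 2"
  have s: "s > 1" "M < (\<Sum>n<N. 1 / real (Suc n) powr s)"
    using b by (auto simp: s_def)
  have "(\<Sum>n<N. 1 / real (Suc n) powr s) \<le> zeta s"
    unfolding zeta_def using s(1) by (intro sum_le_suminf summable_zeta_terms) auto
  with s show ?thesis by auto
qed

lemma zeta_tendsto_one: "(zeta \<longlongrightarrow> 1) at_top"
proof -
  have lim: "((\<lambda>s. 1 / real (Suc k) powr s) \<longlongrightarrow> (if k = 0 then 1 else 0)) at_top" for k
  proof (cases "k = 0")
    case False
    then show ?thesis by simp real_asymp
  qed simp
  have bound: "norm (1 / real (Suc k) powr s) \<le> 1 / real (Suc k) powr 2" if "s \<ge> 2" for k s
  proof -
    have "real (Suc k) powr 2 \<le> real (Suc k) powr s" using that by (intro powr_mono) auto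
    then show ?thesis by (simp add: frac_le)
  qed
  have "\<forall>\<^sub>F (k, s) in sequentially \<times>\<^sub>F at_top. s \<ge> (2::real)"
    by (subst eventually_prod2) (simp_all add: eventually_ge_at_top)
  then have "\<forall>\<^sub>F (k, s) in sequentially \<times>\<^sub>F at_top.
      norm (1 / real (Suc k) powr s) \<le> 1 / real (Suc k) powr 2"
    by (rule eventually_mono) (clarify, erule bound)
  from tannerys_theorem[OF lim this summable_zeta_terms] show ?thesis
    using sums_single[of 0 "\<lambda>_. 1::real"] unfolding zeta_def by (simp add: sums_iff)
qed

lemma zeta_eq_unique_root:
  assumes "t > 1" shows "\<exists>!s. s > 1 \<and> zeta s = t"
proof -
  obtain a where a: "a > 1" "zeta a > t" using zeta_unbounded_at_one by blast
  have "\<forall>\<^sub>F s in at_top. zeta s < t \<and> s > a"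
    using order_tendstoD(2)[OF zeta_tendsto_one assms] eventually_gt_at_top
    by (rule eventually_conj)
  then obtain b where b: "zeta b < t" "a < b"
    using eventually_happens'[OF trivial_limit_at_top_linorder] by blast
  have "continuous_on {a..b} zeta"
    using continuous_on_zeta[OF a(1)] by (rule continuous_on_subset) auto
  then obtain x where "a \<le> x" "zeta x = t" using IVT2'[of zeta b t a] a b by auto
  show ?thesis
  proof (rule ex1I[of _ x])
    show "x > 1 \<and> zeta x = t" using \<open>a \<le> x\<close> \<open>zeta x = t\<close> a(1) by simp
    show "y = x" if "y > 1 \<and> zeta y = t" for y
      using that \<open>zeta x = t\<close> zeta_strict_antimono[of x y] zeta_strict_antimono[of y x] \<open>a \<le> x\<close> a(1)
      by (cases y x rule: linorder_cases) auto
  qed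
qed

section \<open>The recursion for the Dirichlet inverse\<close>

definition nontrivial_divisors :: "nat \<Rightarrow> nat set" where
  "nontrivial_divisors n = {e. e dvd n \<and> 1 < e \<and> e < n}"

lemma finite_nontrivial_divisors [simp]: "finite (nontrivial_divisors n)"
  unfolding nontrivial_divisors_def by (rule finite_subset[of _ "{..<n}"]) auto

lemma nontrivial_divisorsD:
  assumes "e \<in> nontrivial_divisors n"
  shows "e \<ge> 2" "n div e \<ge> 2" "n div e < n" "n div e \<in> nontrivial_divisors n"
    "n div (n div e) = e" "real n = real e * real (n div e)"
proof -
  from assms obtain k where k: "n = e * k" "1 < e" "e < n"
    unfolding nontrivial_divisors_def by auto
  then have "k \<ge> 2" "n div e = k" by (auto intro: ccontr)
  with k show "e \<ge> 2" "n div e \<ge> 2" "n div e < n" "n div e \<in> nontrivial_divisors n"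
    "n div (n div e) = e" "real n = real e * real (n div e)"
    unfolding nontrivial_divisors_def by auto
qed

lemma divisors_eq_nontrivial_divisors:
  "n \<ge> 2 \<Longrightarrow> {d. d dvd n} = insert n (insert 1 (nontrivial_divisors n))"
  unfolding nontrivial_divisors_def by (auto dest: dvd_imp_le)

lemma sum_divisors_split:
  fixes h :: "nat \<Rightarrow> real"
  assumes "n \<ge> 2"
  shows "(\<Sum>d | d dvd n. h d) = h n + h 1 + (\<Sum>d\<in>nontrivial_divisors n. h d)"
proof -
  have "n \<notin> insert 1 (nontrivial_divisors n)" "1 \<notin> nontrivial_divisors n"
    using assms by (auto simp: nontrivial_divisors_def)
  then show ?thesis using assms by (simp add: divisors_eq_nontrivial_divisors)
qed

function dirichlet_inverse_rec :: "(nat \<Rightarrow> real) \<Rightarrow> nat \<Rightarrow> real" where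
  "dirichlet_inverse_rec f n = (if n = 0 then 0 else if n = 1 then 1 else
     - (f n + (\<Sum>d\<in>nontrivial_divisors n. f (n div d) * dirichlet_inverse_rec f d)))"
  by auto
termination
  by (relation "Wellfounded.measure snd") (auto simp: nontrivial_divisors_def)

declare dirichlet_inverse_rec.simps [simp del]

lemma dirichlet_inverse_rec_0 [simp]: "dirichlet_inverse_rec f 0 = 0"
  and dirichlet_inverse_rec_1 [simp]: "dirichlet_inverse_rec f (Suc 0) = 1"
  by (simp_all add: dirichlet_inverse_rec.simps[of f 0] dirichlet_inverse_rec.simps[of f "Suc 0"])

lemma dirichlet_inverse_eq_rec:
  assumes f1: "f 1 = 1"
  shows "dirichlet_inverse f = dirichlet_inverse_rec f"
  unfolding dirichlet_inverse_def
proof (rule the_equality)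
  let ?g = "dirichlet_inverse_rec f"
  have "(\<Sum>d | d dvd n. f (n div d) * ?g d) = (if n = 1 then 1 else 0)" if "n > 0" for n
  proof (cases "n = 1")
    case False
    with that show ?thesis
      using f1 by (simp add: sum_divisors_split dirichlet_inverse_rec.simps[of f n])
  qed (use f1 in simp)
  then show "?g 0 = 0 \<and> (\<forall>n>0. (\<Sum>d | d dvd n. f (n div d) * ?g d) = (if n = 1 then 1 else 0))"
    by simp
next
  fix g
  assume "g 0 = 0 \<and> (\<forall>n>0. (\<Sum>d | d dvd n. f (n div d) * g d) = (if n = 1 then 1 else 0))"
  then have g0: "g 0 = 0"
    and g_sum: "\<And>n. n > 0 \<Longrightarrow> (\<Sum>d | d dvd n. f (n div d) * g d) = (if n = 1 then 1 else 0)"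
    by auto
  have g1: "g 1 = 1" using g_sum[of 1] f1 by simp
  show "g = dirichlet_inverse_rec f"
  proof
    fix n show "g n = dirichlet_inverse_rec f n"
    proof (induction n rule: less_induct)
      case (less n)
      consider "n = 0" | "n = 1" | "n \<ge> 2" by linarith
      then show ?case
      proof cases
        case 3
        have "(\<Sum>d\<in>nontrivial_divisors n. f (n div d) * g d)
            = (\<Sum>d\<in>nontrivial_divisors n. f (n div d) * dirichlet_inverse_rec f d)"
          using less.IH by (intro sum.cong) (auto simp: nontrivial_divisors_def)
        with g_sum[of n] 3 f1 g1 show ?thesis
          by (simp add: sum_divisors_split dirichlet_inverse_rec.simps[of f n])
      qed (use g0 g1 in simp_all)
    qed
  qed
qed

lemma dirichlet_inverse_recurrence:
  assumes "f 1 = 1" "n \<ge> 2"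
  shows "dirichlet_inverse f n
           = - (f n + (\<Sum>e\<in>nontrivial_divisors n. f e * dirichlet_inverse f (n div e)))"
proof -
  have "(\<Sum>d\<in>nontrivial_divisors n. f (n div d) * dirichlet_inverse f d)
      = (\<Sum>e\<in>nontrivial_divisors n. f e * dirichlet_inverse f (n div e))"
    by (rule sum.reindex_bij_witness[of _ "\<lambda>e. n div e" "\<lambda>e. n div e"])
       (auto dest: nontrivial_divisorsD)
  with assms show ?thesis
    by (simp add: dirichlet_inverse_eq_rec dirichlet_inverse_rec.simps[of f n])
qed

lemma abs_dirichlet_inverse_le_majorant:
  assumes f1: "f 1 = 1"
    and f_le: "\<And>n. n \<ge> 2 \<Longrightarrow> \<bar>f n\<bar> \<le> F n"
    and B: "\<And>n. n \<ge> 2 \<Longrightarrow> F n + (\<Sum>e\<in>nontrivial_divisors n. F e * B (n div e)) \<le> B n"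
  shows "n \<ge> 2 \<Longrightarrow> \<bar>dirichlet_inverse f n\<bar> \<le> B n"
proof (induction n rule: less_induct)
  case (less n)
  have "\<bar>dirichlet_inverse f n\<bar>
      \<le> \<bar>f n\<bar> + \<bar>\<Sum>e\<in>nontrivial_divisors n. f e * dirichlet_inverse f (n div e)\<bar>"
    unfolding dirichlet_inverse_recurrence[of f, OF f1 less.prems] abs_minus_cancel
    by (rule abs_triangle_ineq)
  also have "\<dots> \<le> \<bar>f n\<bar> + (\<Sum>e\<in>nontrivial_divisors n. \<bar>f e\<bar> * \<bar>dirichlet_inverse f (n div e)\<bar>)"
    unfolding abs_mult[symmetric] by (rule add_left_mono[OF sum_abs])
  also have "\<dots> \<le> F n + (\<Sum>e\<in>nontrivial_divisors n. F e * B (n div e))"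
  proof (intro add_mono sum_mono mult_mono)
    fix e assume e: "e \<in> nontrivial_divisors n"
    note E = nontrivial_divisorsD[OF e]
    show "\<bar>f e\<bar> \<le> F e" "0 \<le> F e" using f_le[OF E(1)] by auto
    show "\<bar>dirichlet_inverse f (n div e)\<bar> \<le> B (n div e)"
      using less.IH[OF E(3,2)] .
  qed (use f_le less.prems in auto)
  also have "\<dots> \<le> B n" using B[OF less.prems] .
  finally show ?case .
qed

section \<open>Majorants of the Dirichlet inverse\<close>

lemma bigOmega_mult: "a > 0 \<Longrightarrow> b > 0 \<Longrightarrow> bigOmega (a * b) = bigOmega a + bigOmega b"
  unfolding bigOmega_def by (simp add: prime_factorization_mult)

lemma bigOmega_pos: "n \<ge> 2 \<Longrightarrow> bigOmega n \<ge> 1"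
  unfolding bigOmega_def using prime_factorization_empty_iff[of n]
  by (cases "prime_factorization n") auto

lemma bigOmega_div_nontrivial_divisor:
  assumes "e \<in> nontrivial_divisors n"
  shows "bigOmega (n div e) + 1 \<le> bigOmega n"
proof -
  note E = nontrivial_divisorsD[OF assms]
  have "n = e * (n div e)" using E(6) by (simp flip: of_nat_mult)
  then have "bigOmega n = bigOmega e + bigOmega (n div e)"
    using E(1,2) by (metis bigOmega_mult not_numeral_le_zero not_gr_zero)
  with bigOmega_pos[OF E(1)] show ?thesis by simp
qed

lemma two_power_bigOmega_le: "n > 0 \<Longrightarrow> 2 ^ bigOmega n \<le> n"
proof -
  have "2 ^ size M \<le> prod_mset M" if "\<forall>p\<in>#M. prime p" for M :: "nat multiset"
    using that by (induction M) (auto intro!: mult_mono prime_ge_2_nat)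
  moreover assume "n > 0"
  ultimately show ?thesis
    unfolding bigOmega_def by (metis in_prime_factors_imp_prime prod_mset_prime_factorization_nat)
qed

lemma bigOmega_le_log2: "n > 0 \<Longrightarrow> real (bigOmega n) \<le> ln (real n) / ln 2"
proof -
  assume n: "n > 0"
  have "(2::real) ^ bigOmega n \<le> real n"
    using two_power_bigOmega_le[OF n] by (metis of_nat_le_iff of_nat_numeral of_nat_power)
  then have "real (bigOmega n) * ln 2 \<le> ln (real n)"
    using n
    by (metis ln_le_cancel_iff ln_realpow of_nat_0_less_iff zero_less_numeral zero_less_power)
  then show ?thesis by (simp add: field_simps)
qed

lemma bigOmega_le: "real (bigOmega n) \<le> real n"
proof (cases "n = 0")
  case False
  have "bigOmega n < 2 ^ bigOmega n" by (rule less_exp)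
  also have "\<dots> \<le> n" using False by (intro two_power_bigOmega_le) simp
  finally show ?thesis by simp
qed (simp add: bigOmega_def)

lemma power_le_powr_exp_ln:
  assumes "0 < c" "c < 1" "k \<ge> 1"
  shows "c ^ k \<le> real k powr (exp 1 * ln c)"
proof -
  have "ln (real k / exp 1) \<le> real k / exp 1 - 1" using assms by (intro ln_le_minus_one) auto
  then have "exp 1 * ln (real k) \<le> real k" using assms by (simp add: ln_div field_simps)
  moreover have "ln c \<le> 0" using assms by simp
  ultimately have "real k * ln c \<le> exp 1 * ln c * ln (real k)"
    by (metis mult.commute mult.left_commute mult_right_mono_neg)
  then show ?thesis
    using assms by (simp add: powr_def exp_of_nat_mult[symmetric] powr_realpow[symmetric])
qed

lemma sum_le_mult_zeta_minus_one:
  assumes "s > 1" "finite S" "S \<subseteq> {2..}" "K \<ge> 0" "\<And>k. k \<in> S \<Longrightarrow> a k \<le> K / real k powr s"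
  shows "sum a S \<le> K * (zeta s - 1)"
proof -
  have "sum a S \<le> (\<Sum>k\<in>S. K * (1 / real k powr s))" using assms(5) by (intro sum_mono) simp
  also have "\<dots> \<le> K * (zeta s - 1)"
    unfolding sum_distrib_left[symmetric] using assms
    by (intro mult_left_mono sum_inverse_powr_le_zeta_minus_one) auto
  finally show ?thesis .
qed

lemma sum_nontrivial_divisors_le_mult_zeta_minus_one:
  assumes "s > 1" "K \<ge> 0" "\<And>e. e \<in> nontrivial_divisors n \<Longrightarrow> a e \<le> K / real e powr s"
  shows "(\<Sum>e\<in>nontrivial_divisors n. a e) \<le> K * (zeta s - 1)"
  using assms by (intro sum_le_mult_zeta_minus_one) (auto dest: nontrivial_divisorsD)

lemma powr_mult_powr_add:
  fixes x y a b :: real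
  assumes "x > 0" "y > 0"
  shows "x powr a * y powr (b + a) = (x * y) powr (b + a) / x powr b"
proof -
  have "(x * y) powr (b + a) = x powr b * (x powr a * y powr (b + a))"
    using assms by (simp add: powr_mult powr_add[of x] mult_ac)
  then show ?thesis using assms by simp
qed

lemma bigOmega_powr_majorant_step:
  fixes A s L :: real
  assumes A: "A > 0" and s: "s > 1" "zeta s = 1 / A + 1" and n: "n \<ge> 2"
  shows "A * real n powr L + (\<Sum>e\<in>nontrivial_divisors n. A * real e powr L
           * (real (bigOmega (n div e)) * A * real (n div e) powr (s + L) / 2 powr s))
      \<le> real (bigOmega n) * A * real n powr (s + L) / 2 powr s"
proof -
  define K where "K = A * A * (real (bigOmega n) - 1) * real n powr (s + L) / 2 powr s"
  have "(\<Sum>e\<in>nontrivial_divisors n. A * real e powr L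
           * (real (bigOmega (n div e)) * A * real (n div e) powr (s + L) / 2 powr s))
      \<le> K * (zeta s - 1)"
  proof (rule sum_nontrivial_divisors_le_mult_zeta_minus_one)
    show "K \<ge> 0" using bigOmega_pos[OF n] A by (simp add: K_def)
    fix e assume e: "e \<in> nontrivial_divisors n"
    note E = nontrivial_divisorsD[OF e]
    have "A * real e powr L * (real (bigOmega (n div e)) * A * real (n div e) powr (s + L) / 2 powr s)
        = A * A / 2 powr s * real (bigOmega (n div e))
          * (real e powr L * real (n div e) powr (s + L))"
      by simp
    also have "\<dots> \<le> A * A / 2 powr s * (real (bigOmega n) - 1)
        * (real e powr L * real (n div e) powr (s + L))"
      using bigOmega_div_nontrivial_divisor[OF e] A by (intro mult_right_mono mult_left_mono) auto
    also have "\<dots> = K / real e powr s"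
      using E(1,2) by (simp add: powr_mult_powr_add E(6) K_def)
    finally show "A * real e powr L
        * (real (bigOmega (n div e)) * A * real (n div e) powr (s + L) / 2 powr s)
        \<le> K / real e powr s" .
  qed (use s in auto)
  also have "\<dots> = A * (real (bigOmega n) - 1) * real n powr (s + L) / 2 powr s * (A * (zeta s - 1))"
    by (simp add: K_def field_simps)
  also have "A * (zeta s - 1) = 1" using A s by (simp add: field_simps)
  finally have sum: "(\<Sum>e\<in>nontrivial_divisors n. A * real e powr L
           * (real (bigOmega (n div e)) * A * real (n div e) powr (s + L) / 2 powr s))
      \<le> A * (real (bigOmega n) - 1) * real n powr (s + L) / 2 powr s" by simp
  have "2 powr s \<le> real n powr s" using n s by (intro powr_mono2) auto
  then have "A * real n powr L * 2 powr s \<le> A * real n powr L * real n powr s"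
    using A by (intro mult_left_mono) auto
  then have "A * real n powr L \<le> A * real n powr (s + L) / 2 powr s"
    by (simp add: powr_add field_simps)
  with sum show ?thesis by (simp add: field_simps)
qed

lemma abs_dirichlet_inverse_le_bigOmega_powr:
  fixes f :: "nat \<Rightarrow> real"
  assumes f1: "f 1 = 1" and A: "A > 0" and c: "0 < c" "c < 1"
    and bound: "\<And>n. n \<ge> 2 \<Longrightarrow> \<bar>f n\<bar> \<le> A * c ^ n"
    and s: "s > 1" "zeta s = 1 / A + 1" and "n \<ge> 2"
  shows "\<bar>dirichlet_inverse f n\<bar>
    \<le> real (bigOmega n) * A * real n powr (s + exp 1 * ln c) / 2 powr s"
proof (rule abs_dirichlet_inverse_le_majorant[where f = f
      and F = "\<lambda>n. A * real n powr (exp 1 * ln c)"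
      and B = "\<lambda>n. real (bigOmega n) * A * real n powr (s + exp 1 * ln c) / 2 powr s",
      OF f1 _ bigOmega_powr_majorant_step[OF A s] \<open>n \<ge> 2\<close>])
  show "\<bar>f n\<bar> \<le> A * real n powr (exp 1 * ln c)" if "n \<ge> 2" for n
  proof -
    have "c ^ n \<le> real n powr (exp 1 * ln c)" using c that by (intro power_le_powr_exp_ln) auto
    then show ?thesis using bound[OF that] A by (meson mult_left_mono order_trans less_imp_le)
  qed
qed

lemma powr_majorant_step:
  fixes s L :: real
  assumes s: "s > 1" "zeta s = 2" and n: "n \<ge> 2"
  shows "real n powr L + (\<Sum>e\<in>nontrivial_divisors n. real e powr L * real (n div e) powr (s + L))
      \<le> real n powr (s + L)"
proof -
  define K where "K = real n powr (s + L)"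
  have "real e powr L * real (n div e) powr (s + L) = K / real e powr s"
    if "e \<in> nontrivial_divisors n" for e
    using nontrivial_divisorsD(1,2,6)[OF that] by (simp add: K_def powr_mult_powr_add)
  then have "(\<Sum>e\<in>nontrivial_divisors n. real e powr L * real (n div e) powr (s + L))
      = (\<Sum>e\<in>nontrivial_divisors n. K / real e powr s)"
    by (rule sum.cong[OF refl])
  moreover have "real n powr L = K / real n powr s" using n by (simp add: K_def powr_add)
  moreover have "n \<notin> nontrivial_divisors n" by (simp add: nontrivial_divisors_def)
  ultimately have "real n powr L
      + (\<Sum>e\<in>nontrivial_divisors n. real e powr L * real (n div e) powr (s + L))
      = (\<Sum>e\<in>insert n (nontrivial_divisors n). K / real e powr s)"
    by simp
  also have "\<dots> \<le> K * (zeta s - 1)"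
    using s n by (intro sum_le_mult_zeta_minus_one) (auto simp: K_def dest: nontrivial_divisorsD)
  finally show ?thesis using s by (simp add: K_def)
qed

lemma abs_dirichlet_inverse_le_powr:
  fixes f :: "nat \<Rightarrow> real"
  assumes f1: "f 1 = 1" and A: "A > 0" "A \<le> 1" and c: "0 < c" "c < 1"
    and bound: "\<And>n. n \<ge> 2 \<Longrightarrow> \<bar>f n\<bar> \<le> A * c ^ n"
    and s: "s > 1" "zeta s = 2" and "n \<ge> 2"
  shows "\<bar>dirichlet_inverse f n\<bar> \<le> real n powr (s + exp 1 * ln c)"
proof (rule abs_dirichlet_inverse_le_majorant[where f = f and F = "\<lambda>n. real n powr (exp 1 * ln c)"
      and B = "\<lambda>n. real n powr (s + exp 1 * ln c)", OF f1 _ powr_majorant_step[OF s] \<open>n \<ge> 2\<close>])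
  show "\<bar>f n\<bar> \<le> real n powr (exp 1 * ln c)" if "n \<ge> 2" for n
  proof -
    have "A * c ^ n \<le> c ^ n" using A c by (simp add: mult_left_le_one_le)
    also have "c ^ n \<le> real n powr (exp 1 * ln c)" using c that by (intro power_le_powr_exp_ln) auto
    finally show ?thesis using bound[OF that] by simp
  qed
qed

lemma powr_add_le_powr_half_mult:
  fixes c x y :: real
  assumes "c \<ge> 1" "x \<ge> 2" "y \<ge> 2"
  shows "c powr x * c powr y \<le> c\<^sup>2 * c powr (x * y / 2)"
proof -
  have "0 \<le> (x - 2) * (y - 2)" using assms by simp
  then have "x + y \<le> 2 + x * y / 2" by (simp add: algebra_simps)
  then have "c powr (x + y) \<le> c powr (2 + x * y / 2)" using assms by (intro powr_mono) auto
  then show ?thesis using assms by (simp add: powr_add)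
qed

lemma power_add_bigOmega_powr_le:
  fixes A c s :: real
  assumes "A \<ge> 0" "c \<ge> 1" "s \<ge> 0" "k \<ge> 2"
  shows "A * c ^ k + (real (bigOmega k) - 1) * A * real k powr s / 2 powr s * c powr (real k / 2)
      \<le> A * c ^ k * real (bigOmega k) * (real k powr s / 2 powr s)"
proof -
  define X where "X = real k powr s / 2 powr s"
  have X: "X \<ge> 1" using assms by (simp add: X_def powr_mono2)
  have "c powr (real k / 2) \<le> c powr real k" using assms by (intro powr_mono) auto
  then have ck: "c powr (real k / 2) \<le> c ^ k" using assms by (simp add: powr_realpow)
  have "A * c ^ k \<le> A * c ^ k * X" using mult_left_mono[OF X, of "A * c ^ k"] assms by simp
  moreover have "(real (bigOmega k) - 1) * A * X * c powr (real k / 2)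
      \<le> (real (bigOmega k) - 1) * A * X * c ^ k"
    using ck bigOmega_pos[OF assms(4)] X assms by (intro mult_left_mono) auto
  moreover have "(real (bigOmega k) - 1) * A * real k powr s / 2 powr s * c powr (real k / 2)
      = (real (bigOmega k) - 1) * A * X * c powr (real k / 2)"
    by (simp add: X_def)
  moreover have "A * c ^ k * X + (real (bigOmega k) - 1) * A * X * c ^ k
      = A * c ^ k * real (bigOmega k) * X"
    by (simp add: algebra_simps)
  ultimately show ?thesis unfolding X_def[symmetric] by linarith
qed

lemma power_bigOmega_powr_majorant_step:
  fixes A c s :: real
  assumes A: "A > 0" and c: "c > 1" and s: "s > 1" "zeta s = 1 / (A * c\<^sup>2) + 1" and n: "n \<ge> 2"
  shows "A * c ^ n + (\<Sum>e\<in>nontrivial_divisors n. A * c ^ e * (A * c ^ (n div e)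
           + (real (bigOmega (n div e)) - 1) * A * real (n div e) powr s / 2 powr s
             * c powr (real (n div e) / 2)))
      \<le> A * c ^ n + (real (bigOmega n) - 1) * A * real n powr s / 2 powr s * c powr (real n / 2)"
proof -
  define K where "K = A * A * c\<^sup>2 * (real (bigOmega n) - 1) * (real n powr s / 2 powr s)
    * c powr (real n / 2)"
  have "(\<Sum>e\<in>nontrivial_divisors n. A * c ^ e * (A * c ^ (n div e)
           + (real (bigOmega (n div e)) - 1) * A * real (n div e) powr s / 2 powr s
             * c powr (real (n div e) / 2)))
      \<le> K * (zeta s - 1)"
  proof (rule sum_nontrivial_divisors_le_mult_zeta_minus_one)
    show "K \<ge> 0" using bigOmega_pos[OF n] A by (simp add: K_def)
    fix e assume e: "e \<in> nontrivial_divisors n"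
    note E = nontrivial_divisorsD[OF e]
    define k where "k = n div e"
    have "A * c ^ e * (A * c ^ k + (real (bigOmega k) - 1) * A * real k powr s / 2 powr s
          * c powr (real k / 2))
        \<le> A * c ^ e * (A * c ^ k * real (bigOmega k) * (real k powr s / 2 powr s))"
      using A c s E(2) by (intro mult_left_mono power_add_bigOmega_powr_le) (auto simp: k_def)
    also have "\<dots> = A * A * real (bigOmega k) * (real k powr s / 2 powr s) * (c powr e * c powr k)"
      using c by (simp add: powr_realpow)
    also have "\<dots> \<le> A * A * (real (bigOmega n) - 1) * (real k powr s / 2 powr s)
        * (c\<^sup>2 * c powr (real n / 2))"
    proof (rule mult_mono)
      show "A * A * real (bigOmega k) * (real k powr s / 2 powr s)
          \<le> A * A * (real (bigOmega n) - 1) * (real k powr s / 2 powr s)"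
        using bigOmega_div_nontrivial_divisor[OF e] A
        by (intro mult_right_mono mult_left_mono) (auto simp: k_def)
      show "c powr e * c powr k \<le> c\<^sup>2 * c powr (real n / 2)"
        using powr_add_le_powr_half_mult[of c e k] c E by (simp add: k_def)
    qed (use A bigOmega_pos[OF n] in auto)
    also have "\<dots> = K / real e powr s"
      using E(1,2) by (simp add: K_def E(6) powr_mult k_def)
    finally show "A * c ^ e * (A * c ^ (n div e)
        + (real (bigOmega (n div e)) - 1) * A * real (n div e) powr s / 2 powr s
          * c powr (real (n div e) / 2)) \<le> K / real e powr s"
      unfolding k_def .
  qed (use s in auto)
  also have "\<dots> = (real (bigOmega n) - 1) * A * real n powr s / 2 powr s * c powr (real n / 2)
      * (A * c\<^sup>2 * (zeta s - 1))"
    by (simp add: K_def field_simps)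
  also have "A * c\<^sup>2 * (zeta s - 1) = 1" using A c s by (simp add: field_simps)
  finally show ?thesis by simp
qed

lemma abs_dirichlet_inverse_le_power_bigOmega_powr:
  fixes f :: "nat \<Rightarrow> real"
  assumes f1: "f 1 = 1" and A: "A > 0" and c: "c > 1"
    and bound: "\<And>n. n \<ge> 2 \<Longrightarrow> \<bar>f n\<bar> \<le> A * c ^ n"
    and s: "s > 1" "zeta s = 1 / (A * c\<^sup>2) + 1" and "n \<ge> 2"
  shows "\<bar>dirichlet_inverse f n\<bar>
    \<le> A * c ^ n + (real (bigOmega n) - 1) * A * real n powr s / 2 powr s * c powr (real n / 2)"
  by (rule abs_dirichlet_inverse_le_majorant[where f = f and F = "\<lambda>n. A * c ^ n"
      and B = "\<lambda>n. A * c ^ n + (real (bigOmega n) - 1) * A * real n powr s / 2 powr s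
        * c powr (real n / 2)",
      OF f1 bound power_bigOmega_powr_majorant_step[OF A c s] \<open>n \<ge> 2\<close>])

lemma powr_le_const_mult_exp:
  fixes a b :: real
  assumes "b > 1"
  obtains K where "K > 0" "\<And>n::nat. real n powr a \<le> K * b powr real n"
proof -
  have "(\<lambda>n::nat. real n powr a / b powr real n) \<longlonglongrightarrow> 0"
    using assms by real_asymp
  then have "Bseq (\<lambda>n::nat. real n powr a / b powr real n)"
    by (intro convergent_imp_Bseq convergentI)
  then obtain K where "K > 0" "\<And>n::nat. norm (real n powr a / b powr real n) \<le> K"
    using BseqE by blast
  with assms show ?thesis by (intro that[of K]) (auto simp: field_simps)
qed

lemma growing_bound_le_const_mult_power:
  fixes A c s :: real
  assumes A: "A > 0" and c: "c > 1"
  shows "\<exists>At>0. \<forall>n\<ge>2. A * c ^ n + (real (bigOmega n) - 1) * A * real n powr s / 2 powr s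
    * c powr (real n / 2) \<le> At * c ^ n"
proof -
  have "c powr (1 / 2) > 1" using c by simp
  then obtain K where K: "K > 0" "\<And>n::nat. real n powr (s + 1) \<le> K * c powr (real n / 2)"
    using powr_le_const_mult_exp[of "c powr (1 / 2)" "s + 1"] c by (auto simp: powr_powr)
  show ?thesis
  proof (intro exI[of _ "A + A / 2 powr s * K"] conjI allI impI)
    show "A + A / 2 powr s * K > 0" using A K by (simp add: add_pos_nonneg)
    fix n :: nat assume "n \<ge> 2"
    have "(real (bigOmega n) - 1) * A * real n powr s / 2 powr s * c powr (real n / 2)
        \<le> real n * A * real n powr s / 2 powr s * c powr (real n / 2)"
      using bigOmega_le[of n] A by (intro mult_right_mono divide_right_mono) auto
    also have "\<dots> = A / 2 powr s * real n powr (s + 1) * c powr (real n / 2)"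
      using \<open>n \<ge> 2\<close> by (simp add: powr_add)
    also have "\<dots> \<le> A / 2 powr s * (K * c powr (real n / 2)) * c powr (real n / 2)"
      using K(2)[of n] A by (intro mult_right_mono mult_left_mono) auto
    also have "\<dots> = A / 2 powr s * K * c ^ n"
      using c by (simp add: powr_add[symmetric] powr_realpow)
    finally show "A * c ^ n + (real (bigOmega n) - 1) * A * real n powr s / 2 powr s
        * c powr (real n / 2) \<le> (A + A / 2 powr s * K) * c ^ n"
      by (simp add: algebra_simps)
  qed
qed

theorem proposition3p13:
  fixes f :: "nat \<Rightarrow> real" and A c :: real
  assumes f1: "f 1 = 1"
    and A_pos: "A > 0" and c_pos: "c > 0"
    and bound: "\<forall>n\<ge>2. \<bar>f n\<bar> \<le> A * c ^ n"
  shows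
   "(c < 1 \<longrightarrow>
      (\<exists>!s. s > 1 \<and> zeta s = 1 / A + 1) \<and>
      (\<forall>\<sigma>. \<sigma> > 1 \<and> zeta \<sigma> = 1 / A + 1 \<longrightarrow>
        (\<forall>n\<ge>2.
          \<bar>dirichlet_inverse f n\<bar>
            \<le> real (bigOmega n) * A * real n powr (\<sigma> + exp 1 * ln c) / 2 powr \<sigma> \<and>
          real (bigOmega n) * A * real n powr (\<sigma> + exp 1 * ln c) / 2 powr \<sigma>
            \<le> A * real n powr (\<sigma> + exp 1 * ln c) * ln (real n) / (2 powr \<sigma> * ln 2))))
    \<and>
    (c < 1 \<and> A \<le> 1 \<longrightarrow>
      (\<exists>!s. s > 1 \<and> zeta s = 2) \<and>
      (\<forall>\<rho>. \<rho> > 1 \<and> zeta \<rho> = 2 \<longrightarrow>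
        (\<forall>n\<ge>2. \<bar>dirichlet_inverse f n\<bar> \<le> real n powr (\<rho> + exp 1 * ln c))))
    \<and>
    (c > 1 \<longrightarrow>
      (\<exists>!s. s > 1 \<and> zeta s = 1 / (A * c\<^sup>2) + 1) \<and>
      (\<forall>\<upsilon>. \<upsilon> > 1 \<and> zeta \<upsilon> = 1 / (A * c\<^sup>2) + 1 \<longrightarrow>
        (\<exists>At>0. \<forall>n\<ge>2.
          \<bar>dirichlet_inverse f n\<bar>
            \<le> A * c ^ n + (real (bigOmega n) - 1) * A * real n powr \<upsilon> / 2 powr \<upsilon>
                 * c powr (real n / 2) \<and>
          A * c ^ n + (real (bigOmega n) - 1) * A * real n powr \<upsilon> / 2 powr \<upsilon>
                 * c powr (real n / 2) \<le> At * c ^ n)))"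
proof -
  note bound' = bound[rule_format]
  have log2_bound: "real (bigOmega n) * A * real n powr t / 2 powr s
      \<le> A * real n powr t * ln (real n) / (2 powr s * ln 2)" if "n \<ge> 2" for n t s
  proof -
    have "real (bigOmega n) * (A * real n powr t / 2 powr s)
        \<le> ln (real n) / ln 2 * (A * real n powr t / 2 powr s)"
      using bigOmega_le_log2[of n] that A_pos by (intro mult_right_mono) auto
    then show ?thesis by (simp add: field_simps)
  qed
  have "\<exists>At>0. \<forall>n\<ge>2. \<bar>dirichlet_inverse f n\<bar>
          \<le> A * c ^ n + (real (bigOmega n) - 1) * A * real n powr s / 2 powr s * c powr (real n / 2)
      \<and> A * c ^ n + (real (bigOmega n) - 1) * A * real n powr s / 2 powr s * c powr (real n / 2)
          \<le> At * c ^ n" if "c > 1" "s > 1" "zeta s = 1 / (A * c\<^sup>2) + 1" for s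
    using abs_dirichlet_inverse_le_power_bigOmega_powr[of f A c, OF f1 A_pos _ bound'] that
      growing_bound_le_const_mult_power[OF A_pos, of c s] by blast
  then show ?thesis
    using zeta_eq_unique_root A_pos c_pos log2_bound
      abs_dirichlet_inverse_le_bigOmega_powr[of f A c, OF f1 A_pos c_pos _ bound']
      abs_dirichlet_inverse_le_powr[of f A c, OF f1 A_pos _ c_pos _ bound']
    by auto
qed

end
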